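(* Let $\sigma_\rho>0$ and let $W$ follow the unit-log-Laplace distribution, i.e. $W$ has PDF $$f_W(w;\sigma_\rho)=\frac{1}{w(1-w)\sigma_\rho}\,f_\ell(A(w)),\qquad 0<w<1,$$ where $f_\ell(x)=\frac{1}{\sqrt2}\exp(-\sqrt2|x|)$ is the PDF of the Laplace distribution with location $0$ and scale $1/\sqrt2$, and $A(w)=\frac{1}{\sigma_\rho}\log\frac{w}{1-w}$. If $\sigma_\rho\le\sqrt2$, then $f_W(\cdot;\sigma_\rho)$ is unimodal with mode $w_0=1/2$. If $\sigma_\rho>\sqrt2$, then $f_W(\cdot;\sigma_\rho)$ is decreasing-increasing-decreasing-increasing with minimum points $$w_-=\frac{1}{1+\exp\big(2\,{\rm arctanh}(\sqrt2/\sigma_\rho)\big)},\qquad w_+=\frac{1}{1+\exp\big(-2\,{\rm arctanh}(\sqrt2/\sigma_\rho)\big)},$$ and maximum point $w_0=1/2$, with $0<w_-<w_0<w_+<1$. Moreover, $f_W(\cdot;\sigma_\rho)$ is not differentiable at $w_0=1/2$ and is symmetric around $w_0=1/2$.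
   Context: This is the unit-log-symmetric distribution ${\rm ULS}(\sigma_\rho,g_c)$ with density generator $g_c(x)=K_0(\sqrt{2x})$, where $K_0(u)=\frac12\int_0^\infty t^{-1}\exp(-t-\frac{u^2}{4t})\,{\rm d}t$ and $\sigma_\rho=\sigma\sqrt{2(1-\rho)}$; for this generator the ULS PDF reduces to the displayed formula. *)

theory Defs
  imports Complex_Main
begin

definition laplace_pdf :: "real \<Rightarrow> real" where
  "laplace_pdf x = 1 / sqrt 2 * exp (- sqrt 2 * \<bar>x\<bar>)"

definition ull_A :: "real \<Rightarrow> real \<Rightarrow> real" where
  "ull_A \<sigma> w = 1 / \<sigma> * ln (w / (1 - w))"

definition ull_pdf :: "real \<Rightarrow> real \<Rightarrow> real" where
  "ull_pdf \<sigma> w = (if 0 < w \<and> w < 1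
      then 1 / (w * (1 - w) * \<sigma>) * laplace_pdf (ull_A \<sigma> w) else 0)"

end

(*
  Put c = sqrt 2 / sigma.  On (0, 1/2] the density equals w^(c-1) (1-w)^(-c-1) / (sigma sqrt 2),
  whose logarithmic derivative (c - 1 + 2w) / (w (1 - w)) changes sign only at w = (1 - c)/2.
  So for c >= 1 the density increases on (0, 1/2], while for c < 1 it decreases up to
  (1 - c)/2 = w_- and increases afterwards.  Since A(1 - w) = -A(w) the density is symmetric
  about 1/2, which carries the picture over to [1/2, 1) with w_+ = 1 - w_-.  At 1/2 the
  left derivative is 4c times the density, while symmetry would force a derivative to vanish.
*)
theory Submission
  imports Defs
begin

definition ull_log_kernel :: "real \<Rightarrow> real \<Rightarrow> real" where
  "ull_log_kernel c w = (c - 1) * ln w - (c + 1) * ln (1 - w)"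

lemma ull_pdf_eq_exp_log_kernel:
  assumes "0 < \<sigma>" "0 < w" "w \<le> 1/2"
  shows "ull_pdf \<sigma> w = exp (ull_log_kernel (sqrt 2 / \<sigma>) w) / (\<sigma> * sqrt 2)"
proof -
  have "0 < 1 - w" "w \<le> 1 - w" using assms by auto
  then have abs_A: "\<bar>ull_A \<sigma> w\<bar> = (ln (1 - w) - ln w) / \<sigma>"
    using assms by (simp add: ull_A_def ln_div abs_if divide_simps)
  have "exp (ull_log_kernel (sqrt 2 / \<sigma>) w)
      = exp (- ln w - ln (1 - w)) * exp (- sqrt 2 * \<bar>ull_A \<sigma> w\<bar>)"
    unfolding mult_exp_exp abs_A ull_log_kernel_def using assms
    by (simp add: field_simps)
  also have "\<dots> = exp (- sqrt 2 * \<bar>ull_A \<sigma> w\<bar>) / (w * (1 - w))"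
    using \<open>0 < 1 - w\<close> assms by (simp add: exp_diff exp_minus field_simps)
  finally show ?thesis
    using assms \<open>0 < 1 - w\<close> by (simp add: ull_pdf_def laplace_pdf_def)
qed

lemma ull_pdf_reflect: "ull_pdf \<sigma> (1 - w) = ull_pdf \<sigma> w"
proof (cases "0 < w \<and> w < 1")
  case True
  then have "ln ((1 - w) / w) = - ln (w / (1 - w))"
    by (simp add: ln_div)
  then have "ull_A \<sigma> (1 - w) = - ull_A \<sigma> w"
    by (simp add: ull_A_def)
  with True show ?thesis by (simp add: ull_pdf_def laplace_pdf_def mult.commute)
qed (auto simp: ull_pdf_def)

lemma has_real_derivative_ull_log_kernel:
  assumes "0 < w" "w < 1"
  shows "(ull_log_kernel c has_real_derivative (c - 1 + 2 * w) / (w * (1 - w))) (at w)"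
  unfolding ull_log_kernel_def using assms
  by (auto intro!: derivative_eq_intros simp: field_simps)

lemma ull_log_kernel_strict_mono:
  assumes "0 < x" "x < y" "y < 1" "1 - c \<le> 2 * x"
  shows "ull_log_kernel c x < ull_log_kernel c y"
proof (rule DERIV_pos_imp_increasing_open[OF \<open>x < y\<close>])
  fix t assume "x < t" "t < y"
  with assms show "\<exists>D. (ull_log_kernel c has_real_derivative D) (at t) \<and> 0 < D"
    by (intro exI[of _ "(c - 1 + 2 * t) / (t * (1 - t))"] conjI
        has_real_derivative_ull_log_kernel) auto
next
  show "continuous_on {x..y} (ull_log_kernel c)"
    unfolding ull_log_kernel_def using assms by (intro continuous_intros) auto
qed

lemma ull_log_kernel_strict_antimono:
  assumes "0 < x" "x < y" "y < 1" "2 * y \<le> 1 - c"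
  shows "ull_log_kernel c y < ull_log_kernel c x"
proof (rule DERIV_neg_imp_decreasing_open[OF \<open>x < y\<close>])
  fix t assume "x < t" "t < y"
  with assms show "\<exists>D. (ull_log_kernel c has_real_derivative D) (at t) \<and> D < 0"
    by (intro exI[of _ "(c - 1 + 2 * t) / (t * (1 - t))"] conjI
        has_real_derivative_ull_log_kernel) (auto simp: divide_neg_pos)
next
  show "continuous_on {x..y} (ull_log_kernel c)"
    unfolding ull_log_kernel_def using assms by (intro continuous_intros) auto
qed

lemma ull_pdf_strict_mono_on:
  assumes "0 < \<sigma>" "S \<subseteq> {0<..1/2}" "\<And>x. x \<in> S \<Longrightarrow> 1 - sqrt 2 / \<sigma> \<le> 2 * x"
  shows "strict_mono_on S (ull_pdf \<sigma>)"
proof (rule strict_mono_onI)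
  fix x y assume "x \<in> S" "y \<in> S" "x < y"
  with assms have "ull_log_kernel (sqrt 2 / \<sigma>) x < ull_log_kernel (sqrt 2 / \<sigma>) y"
    by (intro ull_log_kernel_strict_mono) auto
  moreover have "x \<in> {0<..1/2}" "y \<in> {0<..1/2}" using assms \<open>x \<in> S\<close> \<open>y \<in> S\<close> by auto
  ultimately show "ull_pdf \<sigma> x < ull_pdf \<sigma> y"
    using \<open>0 < \<sigma>\<close> by (simp add: ull_pdf_eq_exp_log_kernel divide_strict_right_mono)
qed

lemma ull_pdf_strict_antimono_on:
  assumes "0 < \<sigma>" "S \<subseteq> {0<..1/2}" "\<And>x. x \<in> S \<Longrightarrow> 2 * x \<le> 1 - sqrt 2 / \<sigma>"
  shows "strict_antimono_on S (ull_pdf \<sigma>)"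
proof (rule monotone_onI)
  fix x y assume "x \<in> S" "y \<in> S" "x < y"
  with assms have "ull_log_kernel (sqrt 2 / \<sigma>) y < ull_log_kernel (sqrt 2 / \<sigma>) x"
    by (intro ull_log_kernel_strict_antimono) auto
  moreover have "x \<in> {0<..1/2}" "y \<in> {0<..1/2}" using assms \<open>x \<in> S\<close> \<open>y \<in> S\<close> by auto
  ultimately show "ull_pdf \<sigma> y < ull_pdf \<sigma> x"
    using \<open>0 < \<sigma>\<close> by (simp add: ull_pdf_eq_exp_log_kernel divide_strict_right_mono)
qed

lemma monotone_on_reflect:
  fixes f :: "real \<Rightarrow> 'a"
  assumes "\<And>x. f (1 - x) = f x" "monotone_on A (<) ord f" "\<And>x. x \<in> B \<Longrightarrow> 1 - x \<in> A"
  shows "monotone_on B (<) (\<lambda>u v. ord v u) f"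
proof (rule monotone_onI)
  fix x y assume "x \<in> B" "y \<in> B" "x < y"
  with assms(2,3) have "ord (f (1 - y)) (f (1 - x))"
    by (auto simp: monotone_on_def)
  then show "ord (f y) (f x)" by (simp only: assms(1))
qed

lemma DERIV_zero_at_center_of_symmetry:
  assumes sym: "\<And>x. f (2 * a - x) = f x" and E: "(f has_real_derivative E) (at a)"
  shows "E = 0"
proof -
  have "((\<lambda>x. f (2 * a - x)) has_real_derivative E * (- 1)) (at a)"
    using E by (intro DERIV_chain2[where f = f]) (auto intro!: derivative_eq_intros)
  then have "(f has_real_derivative - E) (at a)" by (simp add: sym)
  with E have "E = - E" by (rule DERIV_unique)
  then show ?thesis by simp
qed

lemma not_differentiable_at_symmetric_corner:
  fixes f g :: "real \<Rightarrow> real"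
  assumes sym: "\<And>x. f (2 * a - x) = f x"
    and g: "(g has_real_derivative D) (at a)" "D \<noteq> 0"
    and "b < a" and agree: "\<And>x. b < x \<Longrightarrow> x \<le> a \<Longrightarrow> g x = f x"
  shows "\<not> f differentiable (at a)"
proof
  assume "f differentiable (at a)"
  then obtain E where E: "(f has_real_derivative E) (at a)"
    by (auto simp: real_differentiable_def)
  have "(f has_real_derivative D) (at a within {..a})"
    using \<open>b < a\<close> agree
    by (intro has_field_derivative_transform_within[where d = "a - b",
        OF has_field_derivative_at_within[OF g(1)]]) (auto simp: dist_real_def)
  moreover have "(f has_real_derivative E) (at a within {..a})"
    using E by (rule has_field_derivative_at_within)
  moreover have "at a within {..a} \<noteq> bot"
  proof -
    have "at_left a \<le> at a within {..a}" by (rule at_le) auto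
    then show ?thesis using trivial_limit_at_left_real[of a] by (auto simp: bot_unique)
  qed
  ultimately have "D = E" by (rule has_field_derivative_unique)
  with DERIV_zero_at_center_of_symmetry[OF sym E] g(2) show False by simp
qed

lemma ull_pdf_not_differentiable_at_half:
  assumes "0 < \<sigma>"
  shows "\<not> ull_pdf \<sigma> differentiable (at (1/2))"
proof (rule not_differentiable_at_symmetric_corner)
  let ?c = "sqrt 2 / \<sigma>"
  show "ull_pdf \<sigma> (2 * (1/2) - x) = ull_pdf \<sigma> x" for x
    using ull_pdf_reflect by simp
  show "((\<lambda>w. exp (ull_log_kernel ?c w) / (\<sigma> * sqrt 2)) has_real_derivative
      exp (ull_log_kernel ?c (1/2)) * (4 * ?c) / (\<sigma> * sqrt 2)) (at (1/2))"
    using assms has_real_derivative_ull_log_kernel[of "1/2" ?c]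
    by (auto intro!: derivative_eq_intros)
  show "exp (ull_log_kernel ?c (1/2)) * (4 * ?c) / (\<sigma> * sqrt 2) \<noteq> 0"
    using assms by simp
  show "exp (ull_log_kernel ?c x) / (\<sigma> * sqrt 2) = ull_pdf \<sigma> x" if "0 < x" "x \<le> 1/2" for x
    using assms that by (simp add: ull_pdf_eq_exp_log_kernel)
qed simp

lemma ull_pdf_unimodal:
  assumes "0 < \<sigma>" "\<sigma> \<le> sqrt 2"
  shows "strict_mono_on {0<..1/2} (ull_pdf \<sigma>) \<and> strict_antimono_on {1/2..<1} (ull_pdf \<sigma>)"
proof
  have "1 - sqrt 2 / \<sigma> \<le> 0" using assms by simp
  then show incr: "strict_mono_on {0<..1/2} (ull_pdf \<sigma>)"
    by (intro ull_pdf_strict_mono_on[OF \<open>0 < \<sigma>\<close>]) auto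
  show "strict_antimono_on {1/2..<1} (ull_pdf \<sigma>)"
    using monotone_on_reflect[OF ull_pdf_reflect incr, of "{1/2..<1}"] by auto
qed

lemma ull_pdf_bimodal:
  assumes "sqrt 2 < \<sigma>"
  defines "c \<equiv> sqrt 2 / \<sigma>"
  shows "strict_antimono_on {0<..(1 - c) / 2} (ull_pdf \<sigma>)"
    and "strict_mono_on {(1 - c) / 2..1/2} (ull_pdf \<sigma>)"
    and "strict_antimono_on {1/2..(1 + c) / 2} (ull_pdf \<sigma>)"
    and "strict_mono_on {(1 + c) / 2..<1} (ull_pdf \<sigma>)"
proof -
  have "0 < \<sigma>" using assms(1) by (meson less_trans real_sqrt_gt_zero zero_less_numeral)
  then have "0 < c" "c < 1" using assms by (auto simp: c_def)
  show decr: "strict_antimono_on {0<..(1 - c) / 2} (ull_pdf \<sigma>)"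
    using \<open>0 < c\<close> unfolding c_def by (intro ull_pdf_strict_antimono_on[OF \<open>0 < \<sigma>\<close>]) auto
  show incr: "strict_mono_on {(1 - c) / 2..1/2} (ull_pdf \<sigma>)"
    using \<open>c < 1\<close> unfolding c_def by (intro ull_pdf_strict_mono_on[OF \<open>0 < \<sigma>\<close>]) auto
  show "strict_antimono_on {1/2..(1 + c) / 2} (ull_pdf \<sigma>)"
    using monotone_on_reflect[OF ull_pdf_reflect incr, of "{1/2..(1 + c) / 2}"] by auto
  show "strict_mono_on {(1 + c) / 2..<1} (ull_pdf \<sigma>)"
    using monotone_on_reflect[OF ull_pdf_reflect decr, of "{(1 + c) / 2..<1}"] by auto
qed

lemma inverse_one_plus_exp_two_artanh:
  fixes c :: real
  assumes "\<bar>c\<bar> < 1"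
  shows "1 / (1 + exp (2 * artanh c)) = (1 - c) / 2"
proof -
  have "exp (2 * artanh c) = (1 + c) / (1 - c)"
    using assms by (simp add: artanh_def)
  then show ?thesis
    using assms by (simp only:) (simp add: field_simps)
qed

theorem theorem3:
  fixes \<sigma> :: real
  assumes "\<sigma> > 0"
  defines "w_minus \<equiv> 1 / (1 + exp (2 * artanh (sqrt 2 / \<sigma>)))"
      and "w_plus \<equiv> 1 / (1 + exp (- 2 * artanh (sqrt 2 / \<sigma>)))"
  shows "(\<sigma> \<le> sqrt 2 \<longrightarrow>
            strict_mono_on {0<..1/2} (ull_pdf \<sigma>) \<and>
            strict_antimono_on {1/2..<1} (ull_pdf \<sigma>))
       \<and> (\<sigma> > sqrt 2 \<longrightarrow>
            0 < w_minus \<and> w_minus < 1/2 \<and> 1/2 < w_plus \<and> w_plus < 1 \<and>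
            strict_antimono_on {0<..w_minus} (ull_pdf \<sigma>) \<and>
            strict_mono_on {w_minus..1/2} (ull_pdf \<sigma>) \<and>
            strict_antimono_on {1/2..w_plus} (ull_pdf \<sigma>) \<and>
            strict_mono_on {w_plus..<1} (ull_pdf \<sigma>))
       \<and> \<not> (ull_pdf \<sigma> differentiable (at (1/2)))
       \<and> (\<forall>w. 0 < w \<and> w < 1 \<longrightarrow> ull_pdf \<sigma> (1 - w) = ull_pdf \<sigma> w)"
proof (cases "\<sigma> > sqrt 2")
  case True
  then have c: "0 < sqrt 2 / \<sigma>" "sqrt 2 / \<sigma> < 1" using assms(1) by auto
  then have w_minus: "w_minus = (1 - sqrt 2 / \<sigma>) / 2"
    and w_plus: "w_plus = (1 + sqrt 2 / \<sigma>) / 2"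
    using inverse_one_plus_exp_two_artanh[of "sqrt 2 / \<sigma>"]
      inverse_one_plus_exp_two_artanh[of "- (sqrt 2 / \<sigma>)"]
    by (simp_all add: w_minus_def w_plus_def)
  show ?thesis
    unfolding w_minus w_plus
    using assms(1) True c ull_pdf_bimodal[OF True]
      ull_pdf_not_differentiable_at_half[OF assms(1)] ull_pdf_reflect
    by auto
next
  case False
  then show ?thesis
    using ull_pdf_unimodal[OF assms(1)] ull_pdf_not_differentiable_at_half[OF assms(1)]
      ull_pdf_reflect
    by auto
qed

end
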